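(* Let $p\colon(0,\infty)\to\mathbb{R}$ be smooth with $p'>0$, $A(\rho)=\rho^{-1}\sqrt{p'(\rho)}$, and let $\alpha_0,\alpha_1,\alpha_2,\alpha_3$ be real constants with $\alpha_2\neq0$. Let $G$ be an antiderivative of $\rho\mapsto A(\rho)^2(\rho+\alpha_3)$ on an interval $I\subset(0,\infty)$ not containing $-\alpha_3$. For $(\rho,t)\in I\times\mathbb{R}$ define $$U(\rho,t)=\frac{\alpha_2\rho t+\alpha_1\rho+\alpha_0}{\rho+\alpha_3},$$ $$g(\rho,t)=-\frac{G(\rho)}{\alpha_2}+\frac{\alpha_2^2t^2\rho(\rho+2\alpha_3)+2t\alpha_2\bigl(\alpha_3(\alpha_0+2\alpha_1\rho)+\alpha_1\rho^2\bigr)-(\alpha_0-\alpha_1\alpha_3)^2}{2\alpha_2(\rho+\alpha_3)^2}.$$ Then the surface $$N=\{(t,x,u,\rho)=(t,\,g(\rho,t),\,U(\rho,t),\,\rho):(\rho,t)\in I\times\mathbb{R}\}\subset E$$ is a multivalued solution of the system $\rho_t+(\rho u)_x=0$, $u_t+uu_x+\frac{p'(\rho)}{\rho}\rho_x=0$, i.e. $\omega_1|_N=\omega_2|_N=0$. Equivalently, the density is given implicitly by $x=g(\rho,t)$ and the velocity by $u=\frac{\alpha_2\rho t+\alpha_1\rho+\alpha_0}{\rho+\alpha_3}$.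
   Context: $E$ is the zero-jet space with coordinates $(t,x,u,\rho)$, $\rho>0$, and $\omega_1=\rho\,dt\wedge du+u\,dt\wedge d\rho-dx\wedge d\rho$, $\omega_2=u\,dt\wedge du+\frac{p'(\rho)}{\rho}dt\wedge d\rho-dx\wedge du$. A 2-dimensional submanifold $N\subset E$ is called a multivalued solution of the system if $\omega_1|_N=\omega_2|_N=0$; where $N$ projects diffeomorphically onto the $(t,x)$-plane it is the graph of a classical solution $(u(t,x),\rho(t,x))$. *)

theory Defs
  imports "HOL-Analysis.Analysis"
begin

text \<open>The 2-forms omega_1, omega_2 evaluated at a point P
  on a pair of tangent vectors a, b, using (dy_i wedge dy_j)(a,b) = a_i b_j - a_j b_i.
  The parameter pd stands for p'.\<close>

definition omega1 :: "real\<times>real\<times>real\<times>real \<Rightarrow> real\<times>real\<times>real\<times>real \<Rightarrow> real\<times>real\<times>real\<times>real \<Rightarrow> real" where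
  "omega1 P a b =
     (case P of (t, x, u, r) \<Rightarrow> case a of (a_t, ax, au, ar) \<Rightarrow> case b of (bt, bx, bu, br) \<Rightarrow>
        r * (a_t * bu - au * bt) + u * (a_t * br - ar * bt) - (ax * br - ar * bx))"

definition omega2 :: "(real \<Rightarrow> real) \<Rightarrow> real\<times>real\<times>real\<times>real \<Rightarrow> real\<times>real\<times>real\<times>real \<Rightarrow> real\<times>real\<times>real\<times>real \<Rightarrow> real" where
  "omega2 pd P a b =
     (case P of (t, x, u, r) \<Rightarrow> case a of (a_t, ax, au, ar) \<Rightarrow> case b of (bt, bx, bu, br) \<Rightarrow>
        u * (a_t * bu - au * bt) + (pd r / r) * (a_t * br - ar * bt) - (ax * bu - au * bx))"

text \<open>A surface N = phi ` D, given by a parametrization phi of an open parameter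
  domain D in R^2, is a 2-dimensional (embedded) submanifold of E that is a multivalued
  solution: phi is a differentiable injective immersion, homeomorphic onto its image,
  and both 2-forms vanish on every tangent plane of N (omega_i restricted to N is 0).\<close>

definition multivalued_solution ::
  "(real \<Rightarrow> real) \<Rightarrow> (real\<times>real \<Rightarrow> real\<times>real\<times>real\<times>real) \<Rightarrow> (real\<times>real) set \<Rightarrow> bool" where
  "multivalued_solution pd phi D \<longleftrightarrow>
     open D \<and> inj_on phi D \<and> continuous_on (phi ` D) (inv_into D phi) \<and>
     (\<forall>z\<in>D. \<exists>phi'. (phi has_derivative phi') (at z) \<and> inj phi' \<and>
        (\<forall>v w. omega1 (phi z) (phi' v) (phi' w) = 0 \<and> omega2 pd (phi z) (phi' v) (phi' w) = 0))"

definition Ufun :: "real \<Rightarrow> real \<Rightarrow> real \<Rightarrow> real \<Rightarrow> real \<Rightarrow> real \<Rightarrow> real" where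
  "Ufun a0 a1 a2 a3 r t = (a2 * r * t + a1 * r + a0) / (r + a3)"

definition gfun :: "(real \<Rightarrow> real) \<Rightarrow> real \<Rightarrow> real \<Rightarrow> real \<Rightarrow> real \<Rightarrow> real \<Rightarrow> real \<Rightarrow> real" where
  "gfun G a0 a1 a2 a3 r t =
     - G r / a2 +
     (a2^2 * t^2 * r * (r + 2 * a3) + 2 * t * a2 * (a3 * (a0 + 2 * a1 * r) + a1 * r^2)
        - (a0 - a1 * a3)^2) / (2 * a2 * (r + a3)^2)"

end

theory Submission
  imports Defs
begin

text \<open>Both 2-forms are bilinear and alternating, so they vanish on the tangent planes of the
  surface x = g(rho,t), u = U(rho,t) as soon as they vanish on the two coordinate tangent
  vectors; written out, this is the first order system  g_t = U + rho U_rho  and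
  rho U_rho^2 - g_rho U_t = p'(rho)/rho.  For the given U one has U_rho = W/(rho + a3)^2 with
  W = a2 a3 t + a1 a3 - a0, and the rational part of g is chosen so that g_t = U + rho U_rho and
  g_rho = -G'/a2 + W^2/(a2 (rho + a3)^3); the second equation then reduces to
  G'(rho) = p'(rho) (rho + a3)/rho^2, which defines G.\<close>

lemma omega1_combination:
  "omega1 P (v1 *\<^sub>R a + v2 *\<^sub>R b) (w1 *\<^sub>R a + w2 *\<^sub>R b) = (v1 * w2 - v2 * w1) * omega1 P a b"
  by (cases P; cases a; cases b) (simp add: omega1_def algebra_simps)

lemma omega2_combination:
  "omega2 pd P (v1 *\<^sub>R a + v2 *\<^sub>R b) (w1 *\<^sub>R a + w2 *\<^sub>R b) = (v1 * w2 - v2 * w1) * omega2 pd P a b"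
  by (cases P; cases a; cases b) (simp add: omega2_def field_split_simps; algebra)

lemma multivalued_solution_graphI:
  fixes g U g_r g_t U_r U_t :: "real \<Rightarrow> real \<Rightarrow> real"
  assumes "open I"
    and g_deriv: "\<And>r t. r \<in> I \<Longrightarrow>
      ((\<lambda>(r, t). g r t) has_derivative (\<lambda>(v, w). v * g_r r t + w * g_t r t)) (at (r, t))"
    and U_deriv: "\<And>r t. r \<in> I \<Longrightarrow>
      ((\<lambda>(r, t). U r t) has_derivative (\<lambda>(v, w). v * U_r r t + w * U_t r t)) (at (r, t))"
    and mass: "\<And>r t. r \<in> I \<Longrightarrow> g_t r t = U r t + r * U_r r t"
    and momentum: "\<And>r t. r \<in> I \<Longrightarrow> r * (U_r r t)^2 - g_r r t * U_t r t = pd r / r"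
  shows "multivalued_solution pd (\<lambda>(r, t). (t, g r t, U r t, r)) (I \<times> UNIV)"
  unfolding multivalued_solution_def
proof (intro conjI ballI)
  let ?phi = "\<lambda>(r, t). (t, g r t, U r t, r)"
  show "open (I \<times> (UNIV :: real set))" using \<open>open I\<close> by (simp add: open_Times)
  show "inj_on ?phi (I \<times> UNIV)" by (auto simp: inj_on_def)
  show "continuous_on (?phi ` (I \<times> UNIV)) (inv_into (I \<times> UNIV) ?phi)"
  proof (rule continuous_on_cong[THEN iffD2, OF refl])
    fix y assume "y \<in> ?phi ` (I \<times> UNIV)"
    then show "inv_into (I \<times> UNIV) ?phi y = (snd (snd (snd y)), fst y)"
      by (auto intro!: inv_into_f_eq simp: inj_on_def)
  qed (intro continuous_intros)
  fix z assume "z \<in> I \<times> (UNIV :: real set)"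
  then obtain r t where z: "z = (r, t)" and r: "r \<in> I" by auto
  define a where "a = (0 :: real, g_r r t, U_r r t, 1 :: real)"
  define b where "b = (1 :: real, g_t r t, U_t r t, 0 :: real)"
  let ?phi' = "\<lambda>(v, w). v *\<^sub>R a + w *\<^sub>R b"
  have "?phi = (\<lambda>z. (snd z, (\<lambda>(r, t). g r t) z, (\<lambda>(r, t). U r t) z, fst z))"
    by (simp add: fun_eq_iff)
  moreover have "?phi' = (\<lambda>h. (snd h, (\<lambda>(v, w). v * g_r r t + w * g_t r t) h,
                                   (\<lambda>(v, w). v * U_r r t + w * U_t r t) h, fst h))"
    by (simp add: fun_eq_iff a_def b_def)
  ultimately have "(?phi has_derivative ?phi') (at z)"
    using has_derivative_Pair[OF has_derivative_snd[OF has_derivative_ident]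
            has_derivative_Pair[OF g_deriv[OF r] has_derivative_Pair[OF U_deriv[OF r]
              has_derivative_fst[OF has_derivative_ident]]]]
    by (simp only: z id_def)
  moreover have "inj ?phi'" by (auto simp: inj_def a_def b_def)
  moreover have "omega1 (?phi z) a b = g_t r t - U r t - r * U_r r t"
    by (simp add: z a_def b_def omega1_def)
  moreover have "omega2 pd (?phi z) a b
      = U_r r t * (g_t r t - U r t - r * U_r r t) + (r * (U_r r t)^2 - g_r r t * U_t r t - pd r / r)"
    by (simp add: z a_def b_def omega2_def power2_eq_square algebra_simps)
  ultimately show "\<exists>phi'. (?phi has_derivative phi') (at z) \<and> inj phi' \<and>
        (\<forall>v w. omega1 (?phi z) (phi' v) (phi' w) = 0 \<and> omega2 pd (?phi z) (phi' v) (phi' w) = 0)"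
    using mass[OF r] momentum[OF r]
    by (intro exI[of _ ?phi'] conjI allI) (simp_all add: case_prod_beta omega1_combination omega2_combination)
qed

lemma Ufun_has_derivative:
  assumes "r + a3 \<noteq> 0"
  shows "((\<lambda>(r, t). Ufun a0 a1 a2 a3 r t) has_derivative
           (\<lambda>(v, w). v * ((a2 * a3 * t + a1 * a3 - a0) / (r + a3)^2) + w * (a2 * r / (r + a3))))
         (at (r, t))"
proof -
  \<comment> \<open>Substituting r = s - a3 turns every denominator into a power of s, which field_simps
    can clear.\<close>
  obtain s where s: "s \<noteq> 0" "r = s - a3" using assms by (intro that[of "r + a3"]) auto
  have "((\<lambda>z. Ufun a0 a1 a2 a3 (fst z) (snd z)) has_derivative
           (\<lambda>z. fst z * ((a2 * a3 * t + a1 * a3 - a0) / (r + a3)^2) + snd z * (a2 * r / (r + a3))))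
         (at (r, t))"
    unfolding Ufun_def
    apply (rule derivative_eq_intros refl | simp add: assms)+
    apply (simp add: fun_eq_iff s)
    apply (simp add: field_simps s)
    apply algebra
    done
  then show ?thesis by (simp add: case_prod_beta')
qed

lemma gfun_has_derivative:
  assumes "a2 \<noteq> 0" and "r + a3 \<noteq> 0" and "(G has_real_derivative G') (at r)"
  shows "((\<lambda>(r, t). gfun G a0 a1 a2 a3 r t) has_derivative
           (\<lambda>(v, w). v * (- G' / a2 + (a2 * a3 * t + a1 * a3 - a0)^2 / (a2 * (r + a3)^3))
                    + w * (Ufun a0 a1 a2 a3 r t + r * ((a2 * a3 * t + a1 * a3 - a0) / (r + a3)^2))))
         (at (r, t))"
proof -
  obtain s where s: "s \<noteq> 0" "r = s - a3" using assms(2) by (intro that[of "r + a3"]) auto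
  have G: "((\<lambda>z. G (fst z)) has_derivative (\<lambda>z. fst z * G')) (at (r, t))"
    by (rule DERIV_compose_FDERIV[OF _ has_derivative_fst[OF has_derivative_ident]])
       (use assms(3) in simp)
  have "((\<lambda>z. gfun G a0 a1 a2 a3 (fst z) (snd z)) has_derivative
           (\<lambda>z. fst z * (- G' / a2 + (a2 * a3 * t + a1 * a3 - a0)^2 / (a2 * (r + a3)^3))
                    + snd z * (Ufun a0 a1 a2 a3 r t + r * ((a2 * a3 * t + a1 * a3 - a0) / (r + a3)^2))))
         (at (r, t))"
    unfolding gfun_def Ufun_def
    apply (rule G derivative_eq_intros refl | simp add: assms)+
    apply (simp add: fun_eq_iff s)
    apply (simp add: field_simps s assms)
    apply algebra
    done
  then show ?thesis by (simp add: case_prod_beta')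
qed

lemma momentum_identity:
  fixes a2 r s W c :: real
  assumes "a2 \<noteq> 0" "r \<noteq> 0" "s \<noteq> 0"
  shows "r * (W / s^2)^2 - (- (c / r^2 * s) / a2 + W^2 / (a2 * s^3)) * (a2 * r / s) = c / r"
  using assms by (simp add: field_simps power2_eq_square power3_eq_cube)

theorem mainTheorem3:
  fixes p pd :: "real \<Rightarrow> real" and G :: "real \<Rightarrow> real"
    and a0 a1 a2 a3 :: real and I :: "real set"
  assumes smooth: "\<exists>D :: nat \<Rightarrow> real \<Rightarrow> real. D 0 = p \<and> D 1 = pd \<and>
             (\<forall>k. \<forall>r>0. (D k has_real_derivative D (Suc k) r) (at r))"
    and pd_pos: "\<forall>r>0. pd r > 0"
    and a2: "a2 \<noteq> 0"
    and I_int: "is_interval I" and I_open: "open I" and I_ne: "I \<noteq> {}"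
    and I_pos: "I \<subseteq> {0<..}" and I_a3: "- a3 \<notin> I"
    and G_anti: "\<forall>r\<in>I. (G has_real_derivative (sqrt (pd r) / r)^2 * (r + a3)) (at r)"
  shows "multivalued_solution pd
           (\<lambda>(r, t). (t, gfun G a0 a1 a2 a3 r t, Ufun a0 a1 a2 a3 r t, r)) (I \<times> UNIV)"
proof -
  define W where "W t = a2 * a3 * t + a1 * a3 - a0" for t
  have r_I: "r > 0" "r + a3 \<noteq> 0" if "r \<in> I" for r
    using that I_pos I_a3 by (auto simp: add_eq_0_iff2)
  show ?thesis
  proof (rule multivalued_solution_graphI[OF I_open])
    fix r t assume "r \<in> I"
    with r_I a2 G_anti gfun_has_derivative Ufun_has_derivative
    show "((\<lambda>(r, t). gfun G a0 a1 a2 a3 r t) has_derivative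
            (\<lambda>(v, w). v * (- ((sqrt (pd r) / r)^2 * (r + a3)) / a2 + (W t)^2 / (a2 * (r + a3)^3))
                     + w * (Ufun a0 a1 a2 a3 r t + r * (W t / (r + a3)^2)))) (at (r, t))"
      and "((\<lambda>(r, t). Ufun a0 a1 a2 a3 r t) has_derivative
            (\<lambda>(v, w). v * (W t / (r + a3)^2) + w * (a2 * r / (r + a3)))) (at (r, t))"
      by (simp_all add: W_def)
    show "r * (W t / (r + a3)^2)^2
        - (- ((sqrt (pd r) / r)^2 * (r + a3)) / a2 + (W t)^2 / (a2 * (r + a3)^3))
          * (a2 * r / (r + a3)) = pd r / r"
    proof -
      have "(sqrt (pd r) / r)^2 * (r + a3) = pd r / r^2 * (r + a3)"
        using pd_pos r_I[OF \<open>r \<in> I\<close>] by (simp add: power_divide less_imp_le)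
      then show ?thesis
        using momentum_identity[OF a2] r_I[OF \<open>r \<in> I\<close>] by simp
    qed
  qed simp
qed

end
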